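(* Assume $S$ is symmetric, let $k\ge0$ with $F_{k+1}\ne0$, and let $M_k:=\sum_{\ell=0}^k[(1-A_k)^{-1}]_{0,\ell}$. Then $$M_k=\frac{\sum_{\ell=0}^{\lfloor k/2\rfloor}F^+_{k,\ell}}{F^+_{k+1}}.$$
   Context: Let $S$ be a finite set of integers with $a:=\max S\ge1$; $S$ is called symmetric if $-S=S$ and $\omega_{-s}=\omega_s$ for all $s\in S$, where each $s\in S$ carries a weight $\omega_s$ in a field $K$ of characteristic $0$; set $\omega_s:=0$ for $s\notin S$. For $k\ge0$, $A_k$ is the $(k+1)\times(k+1)$ matrix with rows and columns indexed by $0,\dots,k$ whose $(i,j)$ entry is $\omega_{j-i}$; $F_k:=\det(1-A_{k-1})$ for $k\ge1$. ($M_k$ is, for formal weights, the generating function of meanders with steps in $S$ of height at most $k$.) For $k\ge0$, $A_k^+$ is the matrix with rows and columns indexed by the integers $0\le i,j\le k/2$ and entries $\omega_{j-i}+\omega_{k-j-i}$ if $j<k/2$ and $\omega_{j-i}$ if $j=k/2$. The determinant of an empty matrix is $1$. Put $F^+_k:=\det(1-A^+_{k-1})$ for $k\ge1$. For $0\le\ell\le k/2$, $F^+_{k,\ell}$ is the $(\ell,0)$ cofactor of $1-A_k^+$, i.e. $(-1)^\ell$ times the determinant of $1-A_k^+$ with row $\ell$ and column $0$ deleted. *)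

theory Defs
  imports "Jordan_Normal_Form.Gauss_Jordan_Elimination" "Jordan_Normal_Form.Determinant"
begin

text \<open>Weights are a function w :: int => 'a (w s = 0 outside S).
  A_k is the (k+1) x (k+1) matrix with (i,j) entry w (j - i).\<close>
definition A_mat :: "(int \<Rightarrow> 'a::field) \<Rightarrow> nat \<Rightarrow> 'a mat" where
  "A_mat w k = mat (k+1) (k+1) (\<lambda>(i,j). w (int j - int i))"

definition F_det :: "(int \<Rightarrow> 'a::field) \<Rightarrow> nat \<Rightarrow> 'a" where
  "F_det w k = det (1\<^sub>m k - A_mat w (k - 1))"

text \<open>A_k^+ : indices 0 <= i,j <= k/2, i.e. i,j < k div 2 + 1; the condition j < k/2 is 2*j < k.\<close>
definition Aplus_mat :: "(int \<Rightarrow> 'a::field) \<Rightarrow> nat \<Rightarrow> 'a mat" where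
  "Aplus_mat w k = mat (k div 2 + 1) (k div 2 + 1)
     (\<lambda>(i,j). if 2 * j < k then w (int j - int i) + w (int k - int j - int i)
              else w (int j - int i))"

definition Fplus :: "(int \<Rightarrow> 'a::field) \<Rightarrow> nat \<Rightarrow> 'a" where
  "Fplus w k = det (1\<^sub>m ((k - 1) div 2 + 1) - Aplus_mat w (k - 1))"

definition Fplus_cof :: "(int \<Rightarrow> 'a::field) \<Rightarrow> nat \<Rightarrow> nat \<Rightarrow> 'a" where
  "Fplus_cof w k l = cofactor (1\<^sub>m (k div 2 + 1) - Aplus_mat w k) l 0"

end

theory Submission
  imports Defs
begin

text \<open>For even weights the matrix \<open>1 - A\<^sub>k\<close> is persymmetric, i.e. invariant under the
  reflection \<open>i \<mapsto> k - i\<close> of rows and columns. Hence the vector \<open>x\<close> of row sums of its inverse,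
  the unique solution of \<open>(1 - A\<^sub>k) x = 1\<close>, is symmetric: \<open>x\<^sub>j = x\<^sub>k\<^sub>-\<^sub>j\<close>. Folding the columns
  \<open>j > k/2\<close> onto \<open>k - j\<close> turns the first \<open>\<lfloor>k/2\<rfloor> + 1\<close> equations into \<open>(1 - A\<^sup>+\<^sub>k) x = 1\<close>,
  and this folded matrix is again nonsingular. Cramer's rule for \<open>x\<^sub>0 = M\<^sub>k\<close> then gives the
  quotient of the sum of the cofactors in column \<open>0\<close> by \<open>det (1 - A\<^sup>+\<^sub>k) = F\<^sup>+\<^sub>k\<^sub>+\<^sub>1\<close>.\<close>

lemma even_weight_if_symmetric:
  fixes S :: "'b::group_add set" and w :: "'b \<Rightarrow> 'a::zero"
  assumes "\<And>s. s \<notin> S \<Longrightarrow> w s = 0" and "uminus ` S = S"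
    and "\<And>s. s \<in> S \<Longrightarrow> w (- s) = w s"
  shows "w (- s) = w s"
proof (cases "s \<in> S")
  case False
  have "- s \<notin> S"
  proof
    assume "- s \<in> S"
    then have "s \<in> uminus ` S" by (rule image_eqI[rotated]) simp
    with False assms(2) show False by simp
  qed
  with False show ?thesis using assms(1) by simp
qed (use assms(3) in simp)

lemma mult_vec_index_sum:
  assumes "A \<in> carrier_mat n n" "v \<in> carrier_vec n" "i < n"
  shows "(A *\<^sub>v v) $ i = (\<Sum>j<n. A $$ (i,j) * v $ j)"
  using assms by (auto simp: scalar_prod_def atLeast0LessThan)

lemma det_nonzero_solution_unique:
  fixes A :: "'a::field mat"
  assumes A: "A \<in> carrier_mat n n" and "det A \<noteq> 0"
    and hom: "\<And>i. i < n \<Longrightarrow> (\<Sum>j<n. A $$ (i,j) * y j) = 0" and "j < n"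
  shows "y j = 0"
proof -
  define v where "v = vec n y"
  have v: "v \<in> carrier_vec n" unfolding v_def by simp
  have "A *\<^sub>v v = 0\<^sub>v n"
  proof (rule eq_vecI)
    fix i assume "i < dim_vec (0\<^sub>v n :: 'a vec)"
    then show "(A *\<^sub>v v) $ i = 0\<^sub>v n $ i"
      using hom[of i] by (subst mult_vec_index_sum[OF A v]) (simp_all add: v_def)
  qed (use A in simp)
  with assms(2) v have "v = 0\<^sub>v n"
    using det_0_iff_vec_prod_zero_field[OF A] by blast
  then show ?thesis using \<open>j < n\<close> unfolding v_def by (metis index_vec index_zero_vec(1))
qed

lemma mat_inverse_exists_if_det_nonzero:
  fixes A :: "'a::field mat"
  assumes A: "A \<in> carrier_mat n n" and "det A \<noteq> 0"
  obtains Ainv where "mat_inverse A = Some Ainv"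
  using mat_inverse(1)[OF A, of "()"] det_non_zero_imp_unit[OF assms] by fastforce

lemma mat_inverse_row_sums_solve:
  fixes A :: "'a::field mat"
  assumes A: "A \<in> carrier_mat n n" and inv: "mat_inverse A = Some Ainv" and "i < n"
  shows "(\<Sum>j<n. A $$ (i,j) * (\<Sum>l<n. Ainv $$ (j,l))) = 1"
proof -
  have AAinv: "A * Ainv = 1\<^sub>m n" and Ainv: "Ainv \<in> carrier_mat n n"
    using mat_inverse(2)[OF A inv] by auto
  have "(\<Sum>j<n. A $$ (i,j) * (\<Sum>l<n. Ainv $$ (j,l))) = (\<Sum>l<n. \<Sum>j<n. A $$ (i,j) * Ainv $$ (j,l))"
    by (simp add: sum_distrib_left) (rule sum.swap)
  also have "\<dots> = (\<Sum>l<n. (A * Ainv) $$ (i,l))"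
    using A Ainv \<open>i < n\<close> by (simp add: scalar_prod_def atLeast0LessThan)
  also have "\<dots> = 1"
    using \<open>i < n\<close> by (simp add: AAinv)
  finally show ?thesis .
qed

text \<open>Cramer's rule for the first unknown, via \<open>adj A \<cdot> A = det A \<cdot> 1\<close>.\<close>
lemma cofactor_column_sum_eq_det_mult:
  fixes A :: "'a::comm_ring_1 mat"
  assumes A: "A \<in> carrier_mat n n" and "0 < n"
    and sol: "\<And>i. i < n \<Longrightarrow> (\<Sum>j<n. A $$ (i,j) * x j) = 1"
  shows "(\<Sum>i<n. cofactor A i 0) = det A * x 0"
proof -
  have adj: "(\<Sum>i<n. cofactor A i 0 * A $$ (i,j)) = (if j = 0 then det A else 0)"
    if "j < n" for j
  proof -
    have "(\<Sum>i<n. cofactor A i 0 * A $$ (i,j)) = (adj_mat A * A) $$ (0,j)"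
      using A adj_mat(1)[OF A] that \<open>0 < n\<close>
      by (simp add: scalar_prod_def atLeast0LessThan adj_mat_def)
    then show ?thesis using adj_mat(3)[OF A] that \<open>0 < n\<close> by simp
  qed
  have "(\<Sum>i<n. cofactor A i 0) = (\<Sum>i<n. cofactor A i 0 * (\<Sum>j<n. A $$ (i,j) * x j))"
    by (simp add: sol)
  also have "\<dots> = (\<Sum>j<n. (\<Sum>i<n. cofactor A i 0 * A $$ (i,j)) * x j)"
    unfolding sum_distrib_left sum_distrib_right by (subst sum.swap) (simp add: mult.assoc)
  also have "\<dots> = (\<Sum>j<n. if j = 0 then det A * x 0 else 0)"
    by (rule sum.cong) (simp_all add: adj)
  also have "\<dots> = det A * x 0"
    using \<open>0 < n\<close> by simp
  finally show ?thesis .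
qed

definition I_minus_A :: "(int \<Rightarrow> 'a::field) \<Rightarrow> nat \<Rightarrow> nat \<Rightarrow> 'a" where
  "I_minus_A w i j = of_bool (i = j) - w (int j - int i)"

definition I_minus_Aplus :: "(int \<Rightarrow> 'a::field) \<Rightarrow> nat \<Rightarrow> nat \<Rightarrow> nat \<Rightarrow> 'a" where
  "I_minus_Aplus w k i j = of_bool (i = j) -
     (if 2 * j < k then w (int j - int i) + w (int k - int j - int i) else w (int j - int i))"

lemma I_minus_A_mat_carrier: "1\<^sub>m (k+1) - A_mat w k \<in> carrier_mat (k+1) (k+1)"
  unfolding A_mat_def carrier_mat_def by simp

lemma I_minus_Aplus_mat_carrier:
  "1\<^sub>m (k div 2+1) - Aplus_mat w k \<in> carrier_mat (k div 2+1) (k div 2+1)"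
  unfolding Aplus_mat_def carrier_mat_def by simp

lemma I_minus_A_mat_row_sum:
  assumes "i \<le> k"
  shows "(\<Sum>j<k+1. (1\<^sub>m (k+1) - A_mat w k) $$ (i,j) * z j) = (\<Sum>j=0..k. I_minus_A w i j * z j)"
proof -
  have "(1\<^sub>m (k+1) - A_mat w k) $$ (i,j) = I_minus_A w i j" if "j \<le> k" for j
    using assms that by (simp add: A_mat_def I_minus_A_def)
  moreover have "{..<k+1} = {0..k}" by auto
  ultimately show ?thesis by simp
qed

lemma I_minus_Aplus_mat_row_sum:
  assumes "i \<le> k div 2"
  shows "(\<Sum>j<k div 2+1. (1\<^sub>m (k div 2+1) - Aplus_mat w k) $$ (i,j) * z j)
       = (\<Sum>j=0..k div 2. I_minus_Aplus w k i j * z j)"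
proof -
  have "(1\<^sub>m (k div 2+1) - Aplus_mat w k) $$ (i,j) = I_minus_Aplus w k i j"
    if "j \<le> k div 2" for j
    using assms that by (simp add: Aplus_mat_def I_minus_Aplus_def)
  moreover have "{..<k div 2+1} = {0..k div 2}" by auto
  ultimately show ?thesis by simp
qed

lemma I_minus_A_persymmetric:
  assumes even: "\<And>s. w (- s) = w s" and "i \<le> k" "j \<le> k"
  shows "I_minus_A w (k-i) (k-j) = I_minus_A w i j"
proof -
  have "int (k-j) - int (k-i) = - (int j - int i)"
    using assms by auto
  then show ?thesis
    using assms even[of "int j - int i"] unfolding I_minus_A_def by auto
qed

lemma I_minus_A_sum_reflect:
  assumes "\<And>s. w (- s) = w s" and "i \<le> k"
  shows "(\<Sum>j=0..k. I_minus_A w i j * z (k-j)) = (\<Sum>j=0..k. I_minus_A w (k-i) j * z j)"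
proof -
  have "(\<Sum>j=0..k. I_minus_A w (k-i) j * z j) = (\<Sum>j=0..k. I_minus_A w (k-i) (k-j) * z (k-j))"
    by (subst sum.atLeastAtMost_rev) simp
  also have "\<dots> = (\<Sum>j=0..k. I_minus_A w i j * z (k-j))"
    by (rule sum.cong) (use assms I_minus_A_persymmetric[of w] in auto)
  finally show ?thesis by simp
qed

lemma I_minus_A_sum_fold:
  assumes z: "\<And>j. j \<le> k \<Longrightarrow> z (k-j) = z j" and i: "i \<le> k div 2"
  shows "(\<Sum>j=0..k. I_minus_A w i j * z j) = (\<Sum>j=0..k div 2. I_minus_Aplus w k i j * z j)"
proof -
  let ?m = "k div 2"
  have "{0..k} = {0..?m} \<union> {?m+1..k}" by auto
  then have "(\<Sum>j=0..k. I_minus_A w i j * z j)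
      = (\<Sum>j=0..?m. I_minus_A w i j * z j) + (\<Sum>j=?m+1..k. I_minus_A w i j * z j)"
    by (simp add: sum.union_disjoint)
  also have "(\<Sum>j=?m+1..k. I_minus_A w i j * z j)
      = (\<Sum>j\<in>{j\<in>{0..?m}. 2*j<k}. I_minus_A w i (k-j) * z j)"
    by (rule sum.reindex_bij_witness[where i="\<lambda>j. k - j" and j="\<lambda>j. k - j"]) (use z in auto)
  also have "\<dots> = (\<Sum>j=0..?m. if 2*j<k then I_minus_A w i (k-j) * z j else 0)"
    by (rule sum.mono_neutral_cong_left) auto
  also have "(\<Sum>j=0..?m. I_minus_A w i j * z j) + \<dots> = (\<Sum>j=0..?m. I_minus_Aplus w k i j * z j)"
    unfolding sum.distrib[symmetric]
    by (rule sum.cong) (use i in \<open>auto simp: I_minus_A_def I_minus_Aplus_def algebra_simps of_nat_diff\<close>)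
  finally show ?thesis .
qed

lemma I_minus_A_solution_symmetric:
  fixes w :: "int \<Rightarrow> 'a::field"
  assumes even: "\<And>s. w (- s) = w s" and det: "det (1\<^sub>m (k+1) - A_mat w k) \<noteq> 0"
    and sol: "\<And>i. i \<le> k \<Longrightarrow> (\<Sum>j=0..k. I_minus_A w i j * x j) = 1" and "j \<le> k"
  shows "x (k-j) = x j"
proof -
  have "x (k-j) - x j = 0"
  proof (rule det_nonzero_solution_unique[OF I_minus_A_mat_carrier det])
    show "j < k+1"
      using \<open>j \<le> k\<close> by simp
    fix i assume "i < k+1"
    then have i: "i \<le> k" by simp
    have "(\<Sum>j<k+1. (1\<^sub>m (k+1) - A_mat w k) $$ (i,j) * (x (k-j) - x j))
        = (\<Sum>j=0..k. I_minus_A w i j * x (k-j)) - (\<Sum>j=0..k. I_minus_A w i j * x j)"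
      by (simp only: right_diff_distrib sum_subtractf I_minus_A_mat_row_sum[OF i])
    also have "\<dots> = 0"
      using I_minus_A_sum_reflect[where w = w and z = x, OF even i] sol[OF i] sol[of "k-i"] by simp
    finally show "(\<Sum>j<k+1. (1\<^sub>m (k+1) - A_mat w k) $$ (i,j) * (x (k-j) - x j)) = 0" .
  qed
  then show ?thesis by simp
qed

lemma I_minus_Aplus_mat_solution:
  fixes w :: "int \<Rightarrow> 'a::field"
  assumes even: "\<And>s. w (- s) = w s" and det: "det (1\<^sub>m (k+1) - A_mat w k) \<noteq> 0"
    and sol: "\<And>i. i \<le> k \<Longrightarrow> (\<Sum>j=0..k. I_minus_A w i j * x j) = 1" and "i < k div 2+1"
  shows "(\<Sum>j<k div 2+1. (1\<^sub>m (k div 2+1) - Aplus_mat w k) $$ (i,j) * x j) = 1"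
proof -
  have x_sym: "x (k-j) = x j" if "j \<le> k" for j
    by (rule I_minus_A_solution_symmetric[where w = w, OF even det sol that])
  have i: "i \<le> k div 2" using \<open>i < k div 2+1\<close> by simp
  have "(\<Sum>j<k div 2+1. (1\<^sub>m (k div 2+1) - Aplus_mat w k) $$ (i,j) * x j)
      = (\<Sum>j=0..k. I_minus_A w i j * x j)"
    by (simp only: I_minus_Aplus_mat_row_sum[OF i] I_minus_A_sum_fold[where w = w and z = x, OF x_sym i])
  also have "\<dots> = 1"
    using i by (intro sol) simp
  finally show ?thesis .
qed

lemma det_I_minus_Aplus_nonzero:
  fixes w :: "int \<Rightarrow> 'a::field"
  assumes even: "\<And>s. w (- s) = w s" and det: "det (1\<^sub>m (k+1) - A_mat w k) \<noteq> 0"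
  shows "det (1\<^sub>m (k div 2+1) - Aplus_mat w k) \<noteq> 0"
proof
  let ?m = "k div 2" and ?C = "1\<^sub>m (k div 2+1) - Aplus_mat w k"
  note C = I_minus_Aplus_mat_carrier[of k w]
  assume "det ?C = 0"
  then obtain v where v: "v \<in> carrier_vec (?m+1)" and "v \<noteq> 0\<^sub>v (?m+1)"
    and Cv: "?C *\<^sub>v v = 0\<^sub>v (?m+1)"
    using det_0_iff_vec_prod_zero_field[OF C] by blast
  text \<open>Extend the kernel vector \<open>v\<close> of \<open>1 - A\<^sup>+\<^sub>k\<close> symmetrically to a kernel vector of \<open>1 - A\<^sub>k\<close>.\<close>
  define z where "z j = v $ min j (k - j)" for j
  have z_sym: "z (k-j) = z j" if "j \<le> k" for j
    using that by (simp add: z_def min.commute)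
  have z_lower: "z j = v $ j" if "j \<le> ?m" for j
  proof -
    have "j \<le> k - j" using that by presburger
    then show ?thesis by (simp add: z_def)
  qed
  have lower: "(\<Sum>j=0..k. I_minus_A w i j * z j) = 0" if i: "i \<le> ?m" for i
  proof -
    have "(\<Sum>j=0..k. I_minus_A w i j * z j) = (\<Sum>j=0..?m. I_minus_Aplus w k i j * z j)"
      using I_minus_A_sum_fold[where z = z, OF z_sym i] by simp
    also have "\<dots> = (\<Sum>j=0..?m. I_minus_Aplus w k i j * v $ j)"
      by (rule sum.cong) (simp_all add: z_lower)
    also have "\<dots> = (\<Sum>j<?m+1. ?C $$ (i,j) * v $ j)"
      by (rule I_minus_Aplus_mat_row_sum[OF i, symmetric])
    also have "\<dots> = (?C *\<^sub>v v) $ i"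
      using i by (intro mult_vec_index_sum[OF C v, symmetric]) simp
    also have "\<dots> = 0"
      using Cv i by simp
    finally show ?thesis .
  qed
  have kernel: "(\<Sum>j<k+1. (1\<^sub>m (k+1) - A_mat w k) $$ (i,j) * z j) = 0" if "i < k+1" for i
  proof -
    have i: "i \<le> k" using that by simp
    have "(\<Sum>j=0..k. I_minus_A w i j * z j) = 0"
    proof (cases "i \<le> ?m")
      case False
      have "(\<Sum>j=0..k. I_minus_A w i j * z j) = (\<Sum>j=0..k. I_minus_A w i j * z (k-j))"
        by (rule sum.cong) (simp_all add: z_sym)
      also have "\<dots> = (\<Sum>j=0..k. I_minus_A w (k-i) j * z j)"
        by (rule I_minus_A_sum_reflect[where w = w, OF even i])
      also have "\<dots> = 0"
        using False by (intro lower) simp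
      finally show ?thesis .
    qed (rule lower)
    then show ?thesis by (simp only: I_minus_A_mat_row_sum[OF i])
  qed
  have "v = 0\<^sub>v (?m+1)"
  proof (rule eq_vecI)
    fix j assume j: "j < dim_vec (0\<^sub>v (?m+1) :: 'a vec)"
    have "z j = 0"
      using j by (intro det_nonzero_solution_unique[OF I_minus_A_mat_carrier det kernel]) auto
    then show "v $ j = 0\<^sub>v (?m+1) $ j"
      using j z_lower[of j] by simp
  qed (use v in simp)
  with \<open>v \<noteq> 0\<^sub>v (?m+1)\<close> show False ..
qed

theorem mainTheorem12:
  fixes S :: "int set" and w :: "int \<Rightarrow> 'a::field_char_0" and k :: nat
  assumes "finite S" and "S \<noteq> {}" and "Max S \<ge> 1"
    and "\<And>s. s \<notin> S \<Longrightarrow> w s = 0"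
    and "uminus ` S = S" and "\<And>s. s \<in> S \<Longrightarrow> w (- s) = w s"
    and "F_det w (k + 1) \<noteq> 0"
  shows "(\<Sum>l = 0..k. the (mat_inverse (1\<^sub>m (k+1) - A_mat w k)) $$ (0, l))
         = (\<Sum>l = 0..k div 2. Fplus_cof w k l) / Fplus w (k + 1)"
proof -
  have even: "w (- s) = w s" for s
    by (rule even_weight_if_symmetric[where S = S and w = w, OF assms(4-6)])
  let ?B = "1\<^sub>m (k+1) - A_mat w k" and ?C = "1\<^sub>m (k div 2+1) - Aplus_mat w k"
  have det_B: "det ?B \<noteq> 0"
    using assms(7) by (simp add: F_det_def)
  then have det_C: "det ?C \<noteq> 0"
    by (rule det_I_minus_Aplus_nonzero[where w = w, OF even])
  obtain Binv where inv: "mat_inverse ?B = Some Binv"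
    using mat_inverse_exists_if_det_nonzero[OF I_minus_A_mat_carrier det_B] .
  define x where "x j = (\<Sum>l<k+1. Binv $$ (j,l))" for j
  have sol: "(\<Sum>j=0..k. I_minus_A w i j * x j) = 1" if "i \<le> k" for i
    using mat_inverse_row_sums_solve[OF I_minus_A_mat_carrier inv, of i] that
    by (simp only: x_def I_minus_A_mat_row_sum[OF that])
  note solC = I_minus_Aplus_mat_solution[where w = w, OF even det_B sol]
  have "(\<Sum>l=0..k div 2. Fplus_cof w k l) = det ?C * x 0"
    using cofactor_column_sum_eq_det_mult[OF I_minus_Aplus_mat_carrier _ solC]
    by (simp add: Fplus_cof_def atLeast0AtMost lessThan_Suc_atMost)
  moreover have "(\<Sum>l=0..k. the (mat_inverse ?B) $$ (0,l)) = x 0"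
    unfolding inv x_def by (simp add: atLeast0AtMost lessThan_Suc_atMost)
  moreover have "Fplus w (k+1) = det ?C"
    by (simp add: Fplus_def)
  ultimately show ?thesis
    using det_C by simp
qed

end
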